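(* Let $x(t)=x^{(N)}(t)$ be the Markov process with generator $L=L_0+L_s$ defined in the context, and let $R_N(t):=\mathsf E\,V(x(t))$. Assume $\sup_N |R_N(0)|<\infty$, and let $t(N)\to\infty$ as $N\to\infty$. Put $\varkappa=\sum_{j=1}^l k_j^2-k$. Then, as $N\to\infty$ (with $f\sim g$ meaning $f/g\to1$): (i) if $t(N)/N^2\to0$, then $R_N(t(N))\sim\alpha b_2\,t(N)$; (ii) if $t(N)=cN^2$ for a constant $c>0$, then $R_N(t(N))\sim\alpha b_2(\delta\varkappa)^{-1}\big(1-e^{-\delta\varkappa c}\big)N^2$; (iii) if $t(N)/N^2\to\infty$, then $R_N(t(N))\sim\alpha b_2(\delta\varkappa)^{-1}N^2$.
   Context: Fix an integer $k\ge2$ and integers $k_1,\dots,k_l\ge2$ with $k_1+\dots+k_l=k$ (fixed independently of $N$). For $N\ge k$, let $\mathcal I$ be the set of ordered $k$-tuples $(i_1,\dots,i_k)$ of pairwise distinct elements of $\{1,\dots,N\}$. For $(i_1,\dots,i_k)\in\mathcal I$ split it into consecutive blocks $\Gamma_1,\dots,\Gamma_l$ of lengths $k_1,\dots,k_l$ and let $g_j$ be the first element of $\Gamma_j$. The synchronization map $J^{(i_1,\dots,i_k)}:\mathbb{R}^N\to\mathbb{R}^N$, $x\mapsto y$, is $y_m=x_m$ if $m\notin\{i_1,\dots,i_k\}$ and $y_m=x_{g_j}$ if $m\in\Gamma_j$. Let $\alpha>0,\delta>0$ (independent of $N$), and let $\rho$ be a probability measure on $\mathbb{R}$ with compact support and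 $b_2:=\int z^2\rho(dz)>0$. The process $x(t)=(x_1(t),\dots,x_N(t))\in\mathbb{R}^N$ is the continuous-time Markov jump process with generator $L=L_0+L_s$, $(L_0f)(x)=\alpha\sum_{i=1}^N\int\big(f(x+ze_i)-f(x)\big)\rho(dz)$, $(L_sf)(x)=\frac{\delta}{N(N-1)\cdots(N-k+1)}\sum_{(i_1,\dots,i_k)\in\mathcal I}\big(f(J^{(i_1,\dots,i_k)}x)-f(x)\big)$: each particle independently jumps $x_i\to x_i+z$, $z\sim\rho$, at rate $\alpha$, and independently at rate $\delta$ a uniformly random tuple of $\mathcal I$ is chosen and the configuration is replaced by $J^{(i_1,\dots,i_k)}x$. The initial configuration $x(0)$ may be random. $V(x)=\frac{1}{N(N-1)}\sum_{1\le m<n\le N}(x_m-x_n)^2$ (the empirical variance). *)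

theory Defs
  imports "HOL-Probability.Probability" "HOL-Library.Landau_Symbols"
begin

text \<open>Configurations of N particles are functions nat => real; only indices 0..N-1 matter.\<close>

text \<open>Given block lengths ks = [k_1,...,k_l] and a position p in a tuple of length sum ks,
  block_start ks p is the position of the first element of the block containing p.\<close>
fun block_start :: "nat list \<Rightarrow> nat \<Rightarrow> nat" where
  "block_start [] p = 0"
| "block_start (a # ks) p = (if p < a then 0 else a + block_start ks (p - a))"

definition tuples :: "nat \<Rightarrow> nat \<Rightarrow> nat list set" where
  "tuples N k = {is. length is = k \<and> distinct is \<and> set is \<subseteq> {..<N}}"

definition sync_map :: "nat list \<Rightarrow> nat list \<Rightarrow> (nat \<Rightarrow> real) \<Rightarrow> (nat \<Rightarrow> real)" where
  "sync_map ks is x = (\<lambda>m. if m \<in> set is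
      then x (is ! block_start ks (THE p. p < length is \<and> is ! p = m))
      else x m)"

definition gen_L :: "real \<Rightarrow> real \<Rightarrow> real measure \<Rightarrow> nat list \<Rightarrow> nat
    \<Rightarrow> ((nat \<Rightarrow> real) \<Rightarrow> real) \<Rightarrow> (nat \<Rightarrow> real) \<Rightarrow> real" where
  "gen_L \<alpha> \<delta> \<rho> ks N f x =
     \<alpha> * (\<Sum>i<N. \<integral>z. (f (x(i := x i + z)) - f x) \<partial>\<rho>)
   + \<delta> / (\<Prod>j<sum_list ks. real (N - j)) *
       (\<Sum>is\<in>tuples N (sum_list ks). f (sync_map ks is x) - f x)"

text \<open>Uniformization: total jump rate lam = alpha N + delta; one-step transition operator
  K f = f + L f / lam (the embedded jump chain at the rings of a Poisson clock of rate lam).\<close>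
definition unif_rate :: "real \<Rightarrow> real \<Rightarrow> nat \<Rightarrow> real" where
  "unif_rate \<alpha> \<delta> N = \<alpha> * real N + \<delta>"

definition jump_op :: "real \<Rightarrow> real \<Rightarrow> real measure \<Rightarrow> nat list \<Rightarrow> nat
    \<Rightarrow> ((nat \<Rightarrow> real) \<Rightarrow> real) \<Rightarrow> (nat \<Rightarrow> real) \<Rightarrow> real" where
  "jump_op \<alpha> \<delta> \<rho> ks N f x = f x + gen_L \<alpha> \<delta> \<rho> ks N f x / unif_rate \<alpha> \<delta> N"

text \<open>E f(x(t)) for the Markov jump process with generator L and initial law mu0:
  condition on the number n of rings of the Poisson(lam t) clock up to time t.\<close>
definition proc_expect :: "real \<Rightarrow> real \<Rightarrow> real measure \<Rightarrow> nat list \<Rightarrow> nat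
    \<Rightarrow> (nat \<Rightarrow> real) measure \<Rightarrow> ((nat \<Rightarrow> real) \<Rightarrow> real) \<Rightarrow> real \<Rightarrow> real" where
  "proc_expect \<alpha> \<delta> \<rho> ks N \<mu>0 f t =
     (\<Sum>n. exp (- (unif_rate \<alpha> \<delta> N * t)) * (unif_rate \<alpha> \<delta> N * t) ^ n / fact n
            * (\<integral>x. ((jump_op \<alpha> \<delta> \<rho> ks N ^^ n) f) x \<partial>\<mu>0))"

definition emp_var :: "nat \<Rightarrow> (nat \<Rightarrow> real) \<Rightarrow> real" where
  "emp_var N x = 1 / (real N * (real N - 1)) *
     (\<Sum>m<N. \<Sum>n\<in>{m<..<N}. (x m - x n)^2)"

end

(*
  The empirical variance V is, up to constants, an eigenfunction of the generator. A jump z of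
  particle i changes V by a term linear in z, which cancels on summing over i, plus
  z^2/N, so L_0 V = alpha b2. A synchronisation turns V into a quadratic form in x whose average
  over all tuples is invariant under permutations of the particles, hence a multiple of V;
  counting the pairs of particles that become equal identifies it as (1 - kappa/(N(N-1))) V.
  Thus L V = alpha b2 - beta V with beta = delta kappa/(N(N-1)), and E V(x(t)) solves the linear
  ODE R' = alpha b2 - beta R. Since beta ~ delta kappa/N^2, the three regimes are the cases
  beta t -> 0, beta t -> delta kappa c and beta t -> infinity of its explicit solution.
*)
theory Submission
  imports Defs "HOL-Combinatorics.Permutations" "HOL-Real_Asymp.Real_Asymp"
begin

section \<open>Synchronisation maps\<close>

definition index_of :: "'a list \<Rightarrow> 'a \<Rightarrow> nat" where
  "index_of xs a = (THE p. p < length xs \<and> xs ! p = a)"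

lemma index_of_nth: "distinct xs \<Longrightarrow> p < length xs \<Longrightarrow> index_of xs (xs ! p) = p"
  unfolding index_of_def by (rule the_equality) (auto simp: nth_eq_iff_index_eq)

lemma index_of_in_set:
  assumes "distinct xs" "a \<in> set xs"
  shows "index_of xs a < length xs" "xs ! index_of xs a = a"
proof -
  have "\<exists>!p. p < length xs \<and> xs ! p = a" using distinct_Ex1[OF assms] .
  then have "index_of xs a < length xs \<and> xs ! index_of xs a = a"
    unfolding index_of_def by (rule theI')
  then show "index_of xs a < length xs" "xs ! index_of xs a = a" by auto
qed

definition sync_source :: "nat list \<Rightarrow> nat list \<Rightarrow> nat \<Rightarrow> nat" where
  "sync_source ks is m = (if m \<in> set is then is ! block_start ks (index_of is m) else m)"

lemma sync_map_eq_comp: "sync_map ks is x = x \<circ> sync_source ks is"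
  unfolding sync_map_def sync_source_def index_of_def by (rule ext) simp

lemma block_start_le: "block_start ks p \<le> p"
proof (induction ks arbitrary: p)
  case (Cons a ks)
  show ?case using Cons[of "p - a"] by auto
qed simp

lemma sum_lessThan_add:
  "(\<Sum>p<a + b. f p) = (\<Sum>p<a. f p) + (\<Sum>p<b. f (a + p :: nat))"
proof -
  have "(\<Sum>p<a + b. f p) = (\<Sum>p<a. f p) + (\<Sum>p\<in>{a..<a + b}. f p)"
    by (metis add.commute atLeast0LessThan le_add2 sum.atLeastLessThan_concat zero_le)
  also have "(\<Sum>p\<in>{a..<a + b}. f p) = (\<Sum>p<b. f (a + p))"
    using sum.shift_bounds_nat_ivl[of f 0 a b] by (simp add: atLeast0LessThan add.commute)
  finally show ?thesis .
qed

lemma card_same_block_pairs: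
  "(\<Sum>p<sum_list ks. \<Sum>q<sum_list ks. (if block_start ks p = block_start ks q then 1 else 0 :: nat))
     = (\<Sum>j\<leftarrow>ks. j^2)"
proof (induction ks)
  case (Cons a ks)
  let ?K = "sum_list ks" and ?b = "block_start ks" and ?B = "block_start (a # ks)"
  have first_block: "(\<Sum>q<a + ?K. (if ?B p = ?B q then 1 else 0 :: nat)) = a" if "p < a" for p
    using that by (simp add: sum_lessThan_add)
  have later_blocks: "(\<Sum>q<a + ?K. (if ?B (a + p) = ?B q then 1 else 0 :: nat))
      = (\<Sum>q<?K. (if ?b p = ?b q then 1 else 0 :: nat))" for p
    by (simp add: sum_lessThan_add)
  let ?row = "\<lambda>p. \<Sum>q<a + ?K. (if ?B p = ?B q then 1 else 0 :: nat)"
  have "(\<Sum>p<a + ?K. ?row p) = (\<Sum>p<a. ?row p) + (\<Sum>p<?K. ?row (a + p))"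
    by (rule sum_lessThan_add)
  also have "\<dots> = (\<Sum>p<a. a) + (\<Sum>p<?K. \<Sum>q<?K. (if ?b p = ?b q then 1 else 0 :: nat))"
    by (rule arg_cong2[where f = "(+)"]; rule sum.cong[OF refl])
      (simp_all only: first_block later_blocks lessThan_iff)
  finally show ?case using Cons.IH by (simp add: power2_eq_square)
qed simp

lemma sync_source_in_set:
  assumes "distinct is" "length is = sum_list ks" "m \<in> set is"
  shows "sync_source ks is m \<in> set is"
proof -
  have "block_start ks (index_of is m) < length is"
    using index_of_in_set[OF assms(1,3)] block_start_le[of ks "index_of is m"] by linarith
  then show ?thesis using assms(3) by (simp add: sync_source_def)
qed

lemma sync_source_lessThan:
  assumes "is \<in> tuples N (sum_list ks)" "m < N"
  shows "sync_source ks is m < N"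
proof (cases "m \<in> set is")
  case True
  then show ?thesis using sync_source_in_set assms(1) by (auto simp: tuples_def)
qed (use assms in \<open>simp add: sync_source_def\<close>)

lemma sync_source_eq_iff:
  assumes "distinct is" "length is = sum_list ks" "m \<in> set is" "n \<in> set is"
  shows "sync_source ks is m = sync_source ks is n
    \<longleftrightarrow> block_start ks (index_of is m) = block_start ks (index_of is n)"
proof -
  have "block_start ks (index_of is m) < length is" "block_start ks (index_of is n) < length is"
    using index_of_in_set[OF assms(1)] assms(3,4) block_start_le order.strict_trans1 by blast+
  then show ?thesis using assms by (simp add: sync_source_def nth_eq_iff_index_eq)
qed

text \<open>Particles outside the tuple keep their own value, so the pairs (m, n) with the same
  source are the diagonal outside the tuple plus the pairs inside a common block.\<close>
lemma card_sync_source_collisions: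
  assumes T: "is \<in> tuples N (sum_list ks)"
  shows "(\<Sum>m<N. \<Sum>n<N. (if sync_source ks is m = sync_source ks is n then 1 else 0 :: nat))
     = N - sum_list ks + (\<Sum>j\<leftarrow>ks. j^2)"
proof -
  let ?k = "sum_list ks" and ?S = "set is" and ?\<phi> = "sync_source ks is"
  let ?row = "\<lambda>m. (\<Sum>n<N. (if ?\<phi> m = ?\<phi> n then 1 else 0 :: nat))"
  let ?same = "\<lambda>m n. (if block_start ks (index_of is m) = block_start ks (index_of is n)
                     then 1 else 0 :: nat)"
  have d: "distinct is" and len: "length is = ?k" and SN: "?S \<subseteq> {..<N}"
    using T by (auto simp: tuples_def)
  have split: "(\<Sum>m<N. g m) = (\<Sum>m\<in>{..<N} - ?S. g m) + (\<Sum>m\<in>?S. g m)" for g :: "nat \<Rightarrow> nat"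
    using sum.subset_diff[OF SN] by simp
  have \<phi>_in: "?\<phi> m \<in> ?S" if "m \<in> ?S" for m using sync_source_in_set[OF d len that] .
  have \<phi>_out: "?\<phi> m = m" if "m \<notin> ?S" for m using that by (simp add: sync_source_def)
  have row_out: "?row m = 1" if m: "m \<in> {..<N} - ?S" for m
  proof -
    have "?row m = (\<Sum>n<N. (if n = m then 1 else 0 :: nat))"
      using m \<phi>_in \<phi>_out by (intro sum.cong refl) (metis DiffD2)
    then show ?thesis using m by simp
  qed
  have row_in: "?row m = (\<Sum>n\<in>?S. ?same m n)" if m: "m \<in> ?S" for m
  proof -
    have "(\<Sum>n\<in>{..<N} - ?S. (if ?\<phi> m = ?\<phi> n then 1 else 0 :: nat)) = 0"
      using m \<phi>_in \<phi>_out by (intro sum.neutral) (metis DiffD2)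
    moreover have "(\<Sum>n\<in>?S. (if ?\<phi> m = ?\<phi> n then 1 else 0 :: nat)) = (\<Sum>n\<in>?S. ?same m n)"
      using m sync_source_eq_iff[OF d len] by (intro sum.cong) auto
    ultimately show ?thesis using split[of "\<lambda>n. if ?\<phi> m = ?\<phi> n then 1 else 0"] by simp
  qed
  have reindex: "(\<Sum>m\<in>?S. g m) = (\<Sum>p<?k. g (is ! p))" for g :: "nat \<Rightarrow> nat"
    using sum.reindex_bij_betw[OF bij_betw_nth[OF d refl refl], of g] len by simp
  have "(\<Sum>m<N. ?row m) = card ({..<N} - ?S) + (\<Sum>m\<in>?S. \<Sum>n\<in>?S. ?same m n)"
    using split[of ?row] row_out row_in by simp
  also have "card ({..<N} - ?S) = N - ?k"
    using card_Diff_subset[OF finite_set SN] distinct_card[OF d] len by simp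
  also have "(\<Sum>m\<in>?S. \<Sum>n\<in>?S. ?same m n)
      = (\<Sum>p<?k. \<Sum>q<?k. (if block_start ks p = block_start ks q then 1 else 0))"
    unfolding reindex using index_of_nth[OF d] len by simp
  finally show ?thesis by (simp only: card_same_block_pairs)
qed

lemma sum_comp_eq_sum_card_fibres:
  assumes "finite A" "finite B" "\<phi> ` A \<subseteq> B"
  shows "(\<Sum>m\<in>A. h (\<phi> m)) = (\<Sum>a\<in>B. h a * real (card {m\<in>A. \<phi> m = a}))"
proof -
  have "(\<Sum>m\<in>A. h (\<phi> m)) = (\<Sum>a\<in>B. \<Sum>m\<in>{m\<in>A. \<phi> m = a}. h (\<phi> m))"
    using sum.group[OF assms, of "\<lambda>m. h (\<phi> m)"] by simp
  also have "\<dots> = (\<Sum>a\<in>B. \<Sum>m\<in>{m\<in>A. \<phi> m = a}. h a)"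
    by (intro sum.cong) auto
  finally show ?thesis by (simp add: mult.commute)
qed

definition fibre_size :: "nat list \<Rightarrow> nat list \<Rightarrow> nat \<Rightarrow> nat \<Rightarrow> real" where
  "fibre_size ks is N a = real (card {m\<in>{..<N}. sync_source ks is m = a})"

lemma double_sum_sync_source:
  assumes "is \<in> tuples N (sum_list ks)"
  shows "(\<Sum>m<N. \<Sum>n<N. h (sync_source ks is m) (sync_source ks is n))
      = (\<Sum>a<N. \<Sum>b<N. h a b * (fibre_size ks is N a * fibre_size ks is N b))"
proof -
  have im: "sync_source ks is ` {..<N} \<subseteq> {..<N}" using sync_source_lessThan[OF assms] by auto
  have "(\<Sum>m<N. \<Sum>n<N. h (sync_source ks is m) (sync_source ks is n))
      = (\<Sum>m<N. \<Sum>b<N. h (sync_source ks is m) b * fibre_size ks is N b)"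
    unfolding fibre_size_def by (intro sum.cong refl sum_comp_eq_sum_card_fibres im) auto
  also have "\<dots> = (\<Sum>a<N. (\<Sum>b<N. h a b * fibre_size ks is N b) * fibre_size ks is N a)"
    unfolding fibre_size_def by (rule sum_comp_eq_sum_card_fibres[OF _ _ im]) auto
  finally show ?thesis by (simp add: sum_distrib_left sum_distrib_right mult_ac)
qed

lemma sync_source_map:
  assumes "inj \<sigma>" "distinct is"
  shows "sync_source ks (map \<sigma> is) (\<sigma> m) = \<sigma> (sync_source ks is m)"
proof (cases "m \<in> set is")
  case True
  let ?p = "index_of is m"
  have p: "?p < length is" "is ! ?p = m" using index_of_in_set[OF assms(2) True] by auto
  have "distinct (map \<sigma> is)" using assms by (simp add: distinct_map inj_on_def)
  then have "index_of (map \<sigma> is) (\<sigma> m) = ?p" using index_of_nth[of "map \<sigma> is" ?p] p by simp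
  moreover have "block_start ks ?p < length is" using p(1) block_start_le[of ks ?p] by linarith
  ultimately show ?thesis using True by (simp add: sync_source_def)
next
  case False
  then have "\<sigma> m \<notin> set (map \<sigma> is)" using assms(1) by (auto dest: injD)
  then show ?thesis using False by (simp add: sync_source_def)
qed

lemma tuples_map_permutes:
  "\<sigma> permutes {..<N} \<Longrightarrow> is \<in> tuples N k \<Longrightarrow> map \<sigma> is \<in> tuples N k"
  unfolding tuples_def using permutes_in_image[of \<sigma> "{..<N}"]
  by (auto simp: distinct_map permutes_inj_on)

lemma fibre_size_permutes:
  assumes \<sigma>: "\<sigma> permutes {..<N}" and T: "is \<in> tuples N k"
  shows "fibre_size ks (map \<sigma> is) N (\<sigma> a) = fibre_size ks is N a"
proof -
  have "{m\<in>{..<N}. sync_source ks (map \<sigma> is) m = \<sigma> a} = \<sigma> ` {m\<in>{..<N}. sync_source ks is m = a}"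
  proof (rule set_eqI)
    fix m
    have "sync_source ks (map \<sigma> is) m = \<sigma> (sync_source ks is (inv \<sigma> m))"
      using sync_source_map[OF permutes_inj[OF \<sigma>], of "is" ks "inv \<sigma> m"] T
      by (simp add: tuples_def permutes_inverses[OF \<sigma>])
    moreover have "m \<in> \<sigma> ` X \<longleftrightarrow> inv \<sigma> m \<in> X" for X
      by (metis image_iff permutes_inverses[OF \<sigma>])
    moreover have "inv \<sigma> m < N \<longleftrightarrow> m < N"
      using permutes_in_image[OF permutes_inv[OF \<sigma>], of m] by simp
    ultimately show "m \<in> {m\<in>{..<N}. sync_source ks (map \<sigma> is) m = \<sigma> a}
        \<longleftrightarrow> m \<in> \<sigma> ` {m\<in>{..<N}. sync_source ks is m = a}"
      by (simp add: permutes_inj[OF \<sigma>, THEN inj_eq])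
  qed
  then show ?thesis
    unfolding fibre_size_def by (simp add: card_image inj_on_subset[OF permutes_inj[OF \<sigma>]])
qed

definition pair_weight :: "nat list \<Rightarrow> nat \<Rightarrow> nat \<Rightarrow> nat \<Rightarrow> real" where
  "pair_weight ks N a b = (\<Sum>is\<in>tuples N (sum_list ks). fibre_size ks is N a * fibre_size ks is N b)"

lemma pair_weight_permutes:
  assumes \<sigma>: "\<sigma> permutes {..<N}"
  shows "pair_weight ks N (\<sigma> a) (\<sigma> b) = pair_weight ks N a b"
  unfolding pair_weight_def
proof (rule sum.reindex_bij_witness[where i = "map \<sigma>" and j = "map (inv \<sigma>)"])
  fix js assume "js \<in> tuples N (sum_list ks)"
  then show "fibre_size ks (map (inv \<sigma>) js) N a * fibre_size ks (map (inv \<sigma>) js) N b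
      = fibre_size ks js N (\<sigma> a) * fibre_size ks js N (\<sigma> b)"
    using fibre_size_permutes[OF permutes_inv[OF \<sigma>]] by (metis permutes_inverses(2)[OF \<sigma>])
qed (auto simp: tuples_map_permutes \<sigma> permutes_inv[OF \<sigma>] permutes_inverses[OF \<sigma>] comp_def)

lemma pair_weight_offdiag_eq:
  assumes "a < N" "b < N" "a \<noteq> b" "a' < N" "b' < N" "a' \<noteq> b'"
  shows "pair_weight ks N a' b' = pair_weight ks N a b"
proof -
  let ?b = "Transposition.transpose a a' b"
  have "?b < N" "?b \<noteq> a'" using assms by (auto simp: Transposition.transpose_def)
  have "pair_weight ks N a b = pair_weight ks N a' ?b"
    using pair_weight_permutes[OF permutes_swap_id[of a "{..<N}" a'], of ks a b] assms by simp
  also have "\<dots> = pair_weight ks N a' b'"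
    using pair_weight_permutes[OF permutes_swap_id[of ?b "{..<N}" b'], of ks a' ?b]
      assms \<open>?b < N\<close> \<open>?b \<noteq> a'\<close>
    by (simp add: transpose_eq_iff)
  finally show ?thesis by simp
qed

definition sq_diffs :: "nat \<Rightarrow> (nat \<Rightarrow> real) \<Rightarrow> real" where
  "sq_diffs N x = (\<Sum>m<N. \<Sum>n<N. (x m - x n)^2)"

lemma sum_offdiag_const:
  "(\<Sum>a<N. \<Sum>b<N. (if a = b then 0 else c)) = real N * (real N - 1) * (c::real)"
proof -
  have "(\<Sum>b<N. (if a = b then 0 else c)) = (real N - 1) * c" if "a < N" for a
  proof -
    have "(\<Sum>b<N. (if a = b then 0 else c)) = (\<Sum>b<N. c - (if a = b then c else 0))"
      by (rule sum.cong) auto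
    with that show ?thesis by (simp add: sum_subtractf algebra_simps)
  qed
  then show ?thesis by simp
qed

lemma sum_sq_diffs_sync_map:
  assumes "a < N" "b < N" "a \<noteq> b"
  shows "(\<Sum>is\<in>tuples N (sum_list ks). sq_diffs N (sync_map ks is x)) = pair_weight ks N a b * sq_diffs N x"
proof -
  let ?T = "tuples N (sum_list ks)" and ?d = "\<lambda>a b. (x a - x b)^2"
  have "(\<Sum>is\<in>?T. sq_diffs N (sync_map ks is x))
      = (\<Sum>is\<in>?T. \<Sum>a<N. \<Sum>b<N. ?d a b * (fibre_size ks is N a * fibre_size ks is N b))"
    unfolding sq_diffs_def sync_map_eq_comp by (rule sum.cong[OF refl])
      (simp add: double_sum_sync_source[where h = "\<lambda>a b. (x a - x b)^2"])
  also have "\<dots> = (\<Sum>a'<N. \<Sum>b'<N. ?d a' b' * pair_weight ks N a' b')"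
    unfolding pair_weight_def sum_distrib_left by (subst sum.swap) (simp add: sum.swap[of _ ?T])
  also have "\<dots> = (\<Sum>a'<N. \<Sum>b'<N. ?d a' b' * pair_weight ks N a b)"
  proof (intro sum.cong refl)
    fix a' b' assume "a' \<in> {..<N}" "b' \<in> {..<N}"
    then show "?d a' b' * pair_weight ks N a' b' = ?d a' b' * pair_weight ks N a b"
      using pair_weight_offdiag_eq[OF assms, of a' b'] by (cases "a' = b'") simp_all
  qed
  finally show ?thesis by (simp add: sq_diffs_def sum_distrib_left sum_distrib_right mult_ac)
qed

lemma length_le_of_mem_tuples: "is \<in> tuples N k \<Longrightarrow> k \<le> N"
  unfolding tuples_def using card_mono[of "{..<N}" "set is"] by (auto simp: distinct_card)

lemma card_distinct_sync_source_pairs: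
  assumes "is \<in> tuples N (sum_list ks)"
  shows "(\<Sum>m<N. \<Sum>n<N. (if sync_source ks is m = sync_source ks is n then 0 else 1 :: real))
    = real N * real N - real (N - sum_list ks + (\<Sum>j\<leftarrow>ks. j^2))"
proof -
  let ?\<phi> = "sync_source ks is"
  have "(\<Sum>m<N. \<Sum>n<N. (if ?\<phi> m = ?\<phi> n then 0 else 1 :: real))
     = (\<Sum>m<N. \<Sum>n<N. 1 - real (if ?\<phi> m = ?\<phi> n then 1 else 0 :: nat))"
    by (intro sum.cong refl) auto
  also have "\<dots> = real N * real N - real (\<Sum>m<N. \<Sum>n<N. (if ?\<phi> m = ?\<phi> n then 1 else 0 :: nat))"
    by (simp add: sum_subtractf)
  finally show ?thesis by (simp only: card_sync_source_collisions[OF assms])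
qed

text \<open>The constant \<kappa> of the theorem: the number of ordered pairs of distinct positions lying
  in a common block, i.e. of pairs of particles merged by a synchronisation.\<close>
definition merged_pairs :: "nat list \<Rightarrow> real" where
  "merged_pairs ks = real (\<Sum>j\<leftarrow>ks. j^2) - real (sum_list ks)"

lemma merged_pairs_pos:
  assumes "ks \<noteq> []" "\<forall>j\<in>set ks. j \<ge> 2"
  shows "merged_pairs ks > 0"
proof -
  have "sum_list (map (\<lambda>j. j) ks) < sum_list (map (\<lambda>j. j^2) ks)"
    using assms by (intro sum_list_strict_mono) (auto simp: power2_eq_square)
  then show ?thesis unfolding merged_pairs_def by simp
qed

lemma pair_weight_offdiag:
  assumes "a < N" "b < N" "a \<noteq> b"
  shows "pair_weight ks N a b * (real N * (real N - 1))
     = real (card (tuples N (sum_list ks))) * (real N * (real N - 1) - merged_pairs ks)"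
proof -
  let ?T = "tuples N (sum_list ks)" and ?k = "sum_list ks" and ?\<phi> = "sync_source ks"
  let ?off = "\<lambda>a b. (if a = b then 0 else 1 :: real)"
  have "pair_weight ks N a b * (real N * (real N - 1))
      = (\<Sum>a'<N. \<Sum>b'<N. (if a' = b' then 0 else pair_weight ks N a b))"
    by (simp add: sum_offdiag_const)
  also have "\<dots> = (\<Sum>a'<N. \<Sum>b'<N. ?off a' b' * pair_weight ks N a' b')"
  proof (intro sum.cong refl)
    fix a' b' assume "a' \<in> {..<N}" "b' \<in> {..<N}"
    then show "(if a' = b' then 0 else pair_weight ks N a b) = ?off a' b' * pair_weight ks N a' b'"
      using pair_weight_offdiag_eq[OF assms, of a' b'] by simp
  qed
  also have "\<dots> = (\<Sum>is\<in>?T. \<Sum>a'<N. \<Sum>b'<N. ?off a' b' * (fibre_size ks is N a' * fibre_size ks is N b'))"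
    unfolding pair_weight_def sum_distrib_left by (subst sum.swap) (simp add: sum.swap[of _ ?T])
  also have "\<dots> = (\<Sum>is\<in>?T. \<Sum>m<N. \<Sum>n<N. ?off (?\<phi> is m) (?\<phi> is n))"
    by (intro sum.cong refl double_sum_sync_source[symmetric]) auto
  also have "\<dots> = (\<Sum>is\<in>?T. real N * real N - real (N - ?k + (\<Sum>j\<leftarrow>ks. j^2)))"
    by (intro sum.cong refl) (simp add: card_distinct_sync_source_pairs)
  finally have "pair_weight ks N a b * (real N * (real N - 1))
      = real (card ?T) * (real N * real N - real (N - ?k + (\<Sum>j\<leftarrow>ks. j^2)))"
    by simp
  moreover have "?k \<le> N" if "?T \<noteq> {}" using that length_le_of_mem_tuples by blast
  ultimately show ?thesis
    by (cases "?T = {}") (auto simp: merged_pairs_def of_nat_diff algebra_simps)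
qed

lemma card_tuples: "k \<le> N \<Longrightarrow> card (tuples N k) = (\<Prod>j<k. N - j)"
  unfolding tuples_def
  by (subst card_lists_distinct_length_eq, simp_all)
    (rule prod.reindex_bij_witness[where i = "\<lambda>j. N - j" and j = "\<lambda>m. N - m"], auto)

section \<open>The generator on the empirical variance\<close>

lemma sum_upper_pairs_sq_diff:
  "(\<Sum>m<N. \<Sum>n\<in>{m<..<N}. (x m - x n)^2) = real N * (\<Sum>m<N. (x m)^2) - (\<Sum>m<N. x m)^2"
proof (induction N)
  case (Suc N)
  have "(\<Sum>m<Suc N. \<Sum>n\<in>{m<..<Suc N}. (x m - x n)^2)
      = (\<Sum>m<N. (\<Sum>n\<in>{m<..<N}. (x m - x n)^2) + (x m - x N)^2)"
  proof -
    have "{N<..<Suc N} = {}" by auto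
    then have "(\<Sum>m<Suc N. \<Sum>n\<in>{m<..<Suc N}. (x m - x n)^2) = (\<Sum>m<N. \<Sum>n\<in>{m<..<Suc N}. (x m - x n)^2)"
      by simp
    also have "\<dots> = (\<Sum>m<N. (\<Sum>n\<in>{m<..<N}. (x m - x n)^2) + (x m - x N)^2)"
    proof (rule sum.cong[OF refl])
      fix m assume "m \<in> {..<N}"
      then have "{m<..<Suc N} = insert N {m<..<N}" by auto
      then show "(\<Sum>n\<in>{m<..<Suc N}. (x m - x n)^2) = (\<Sum>n\<in>{m<..<N}. (x m - x n)^2) + (x m - x N)^2"
        by simp
    qed
    finally show ?thesis .
  qed
  also have "\<dots> = (\<Sum>m<N. \<Sum>n\<in>{m<..<N}. (x m - x n)^2) + (\<Sum>m<N. (x m - x N)^2)"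
    by (rule sum.distrib)
  also have "(\<Sum>m<N. (x m - x N)^2) = (\<Sum>m<N. (x m)^2) - 2 * x N * (\<Sum>m<N. x m) + real N * (x N)^2"
    by (simp add: power2_diff sum.distrib sum_subtractf sum_distrib_left sum_distrib_right mult_ac)
  also have "(\<Sum>m<N. \<Sum>n\<in>{m<..<N}. (x m - x n)^2) + \<dots>
      = real (Suc N) * (\<Sum>m<Suc N. (x m)^2) - (\<Sum>m<Suc N. x m)^2"
    unfolding Suc.IH by (simp add: algebra_simps power2_eq_square)
  finally show ?case .
qed simp

lemma sq_diffs_eq: "sq_diffs N x = 2 * (real N * (\<Sum>m<N. (x m)^2) - (\<Sum>m<N. x m)^2)"
  unfolding sq_diffs_def
  by (simp add: power2_diff sum.distrib sum_subtractf sum_distrib_left sum_distrib_right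
      algebra_simps power2_eq_square)

lemma emp_var_eq_moments:
  "emp_var N x = (real N * (\<Sum>m<N. (x m)^2) - (\<Sum>m<N. x m)^2) / (real N * (real N - 1))"
  unfolding emp_var_def sum_upper_pairs_sq_diff by simp

lemma emp_var_eq_sq_diffs: "emp_var N x = sq_diffs N x / (2 * (real N * (real N - 1)))"
  unfolding emp_var_eq_moments sq_diffs_eq by (rule mult_divide_mult_cancel_left[symmetric]) simp

lemma sum_fun_upd:
  fixes f :: "'a \<Rightarrow> real" and N :: nat
  assumes "i < N"
  shows "(\<Sum>m<N. f ((x(i := v)) m)) = (\<Sum>m<N. f (x m)) - f (x i) + f v"
proof -
  have "(\<Sum>m<N. f ((x(i := v)) m)) = (\<Sum>m<N. f (x m) + (if m = i then f v - f (x i) else 0))"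
    by (rule sum.cong) auto
  also have "\<dots> = (\<Sum>m<N. f (x m)) + (f v - f (x i))"
    using assms by (simp add: sum.distrib)
  finally show ?thesis by simp
qed

lemma emp_var_update:
  assumes "i < N"
  shows "emp_var N (x(i := x i + z)) - emp_var N x
     = ((2 * real N * x i - 2 * (\<Sum>m<N. x m)) * z + (real N - 1) * z^2) / (real N * (real N - 1))"
  unfolding emp_var_eq_moments sum_fun_upd[OF assms, of "\<lambda>t. t^2"] sum_fun_upd[OF assms, of "\<lambda>t. t"]
  by (simp add: diff_divide_distrib[symmetric] algebra_simps power2_eq_square)

lemma integrable_power_of_AE_bounded:
  fixes M :: "real measure"
  assumes "finite_measure M" "sets M = sets borel" "AE z in M. \<bar>z\<bar> \<le> C"
  shows "integrable M (\<lambda>z. z ^ n)"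
proof (rule Bochner_Integration.integrable_bound)
  interpret finite_measure M by fact
  show "integrable M (\<lambda>_. C ^ n)" by simp
  show "(\<lambda>z. z ^ n) \<in> borel_measurable M" using measurable_ident_sets[OF assms(2)] by measurable
  show "AE z in M. norm (z ^ n) \<le> norm (C ^ n)"
    using assms(3) by eventually_elim (simp add: power_abs power_mono)
qed

lemma sum_integral_emp_var_update:
  fixes \<rho> :: "real measure"
  assumes "prob_space \<rho>" "sets \<rho> = sets borel" "AE z in \<rho>. \<bar>z\<bar> \<le> C" and N: "N \<ge> 2"
  shows "(\<Sum>i<N. \<integral>z. (emp_var N (x(i := x i + z)) - emp_var N x) \<partial>\<rho>) = (\<integral>z. z^2 \<partial>\<rho>)"
proof -
  interpret prob_space \<rho> by fact
  let ?D = "real N * (real N - 1)" and ?b1 = "\<integral>z. z \<partial>\<rho>" and ?b2 = "\<integral>z. z^2 \<partial>\<rho>"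
  have int: "integrable \<rho> (\<lambda>z. z)" "integrable \<rho> (\<lambda>z. z^2)"
    using integrable_power_of_AE_bounded[OF finite_measure assms(2,3), of 1]
      integrable_power_of_AE_bounded[OF finite_measure assms(2,3), of 2] by simp_all
  have "(\<integral>z. (emp_var N (x(i := x i + z)) - emp_var N x) \<partial>\<rho>)
     = (2 * real N * x i - 2 * (\<Sum>m<N. x m)) / ?D * ?b1 + (real N - 1) / ?D * ?b2" if "i < N" for i
  proof -
    have "(\<integral>z. (emp_var N (x(i := x i + z)) - emp_var N x) \<partial>\<rho>)
       = (\<integral>z. (2 * real N * x i - 2 * (\<Sum>m<N. x m)) / ?D * z + (real N - 1) / ?D * z^2 \<partial>\<rho>)"
      unfolding emp_var_update[OF that] by (simp add: add_divide_distrib)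
    then show ?thesis using int by simp
  qed
  moreover have "(\<Sum>i<N. 2 * real N * x i - 2 * (\<Sum>m<N. x m)) = 0"
    by (simp add: sum_subtractf sum_distrib_left mult_ac)
  ultimately have "(\<Sum>i<N. \<integral>z. (emp_var N (x(i := x i + z)) - emp_var N x) \<partial>\<rho>)
      = real N * ((real N - 1) / ?D) * ?b2"
    by (simp add: sum.distrib sum_divide_distrib[symmetric] sum_distrib_right[symmetric])
  also have "\<dots> = ?b2" using N by simp
  finally show ?thesis .
qed

lemma sum_emp_var_sync_map:
  assumes "N \<ge> 2"
  shows "(\<Sum>is\<in>tuples N (sum_list ks). emp_var N (sync_map ks is x))
    = real (card (tuples N (sum_list ks)))
      * (1 - merged_pairs ks / (real N * (real N - 1))) * emp_var N x"
proof -
  let ?D = "real N * (real N - 1)"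
  have "?D > 0" using assms by simp
  then have "pair_weight ks N 0 1
      = real (card (tuples N (sum_list ks))) * (1 - merged_pairs ks / ?D)"
    using pair_weight_offdiag[of 0 N 1 ks] assms by (simp add: field_simps)
  then show ?thesis
    unfolding emp_var_eq_sq_diffs sum_divide_distrib[symmetric]
    using sum_sq_diffs_sync_map[of 0 N 1 ks x] assms by simp
qed

lemma gen_L_affine_emp_var:
  fixes \<rho> :: "real measure"
  assumes \<rho>: "prob_space \<rho>" "sets \<rho> = sets borel" "AE z in \<rho>. \<bar>z\<bar> \<le> C"
    and N: "N \<ge> 2" "sum_list ks \<le> N"
  shows "gen_L \<alpha> \<delta> \<rho> ks N (\<lambda>x. u * emp_var N x + w) x
    = u * (\<alpha> * (\<integral>z. z^2 \<partial>\<rho>) - \<delta> * merged_pairs ks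
        / (real N * (real N - 1)) * emp_var N x)"
proof -
  let ?T = "tuples N (sum_list ks)" and ?D = "real N * (real N - 1)"
  have card: "(\<Prod>j<sum_list ks. real (N - j)) = real (card ?T)"
    using card_tuples[OF N(2)] by (simp add: of_nat_diff)
  have "card ?T > 0" using card_tuples[OF N(2)] N(2) by simp
  have L0: "(\<Sum>i<N. \<integral>z. (u * emp_var N (x(i := x i + z)) + w - (u * emp_var N x + w)) \<partial>\<rho>)
      = u * (\<integral>z. z^2 \<partial>\<rho>)"
  proof -
    have "(\<Sum>i<N. \<integral>z. (u * emp_var N (x(i := x i + z)) + w - (u * emp_var N x + w)) \<partial>\<rho>)
        = u * (\<Sum>i<N. \<integral>z. (emp_var N (x(i := x i + z)) - emp_var N x) \<partial>\<rho>)"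
      by (simp add: sum_distrib_left flip: right_diff_distrib)
    then show ?thesis using sum_integral_emp_var_update[OF \<rho> N(1)] by simp
  qed
  have Ls: "(\<Sum>is\<in>?T. u * emp_var N (sync_map ks is x) + w - (u * emp_var N x + w))
      = real (card ?T) * (u * (- merged_pairs ks / ?D * emp_var N x))"
  proof -
    have "(\<Sum>is\<in>?T. u * emp_var N (sync_map ks is x) + w - (u * emp_var N x + w))
        = u * ((\<Sum>is\<in>?T. emp_var N (sync_map ks is x)) - real (card ?T) * emp_var N x)"
      by (simp add: sum_subtractf sum_distrib_left right_diff_distrib)
    then show ?thesis
      unfolding sum_emp_var_sync_map[OF N(1)] by (simp add: algebra_simps diff_divide_distrib)
  qed
  show ?thesis
    using \<open>card ?T > 0\<close> unfolding gen_L_def L0 Ls card by (simp add: algebra_simps diff_divide_distrib)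
qed

section \<open>The expected empirical variance\<close>

lemma jump_op_power_emp_var:
  fixes \<rho> :: "real measure"
  assumes \<rho>: "prob_space \<rho>" "sets \<rho> = sets borel" "AE z in \<rho>. \<bar>z\<bar> \<le> C"
    and N: "N \<ge> 2" "sum_list ks \<le> N"
    and \<beta>: "\<beta> = \<delta> * merged_pairs ks / (real N * (real N - 1))"
    and \<beta>_nz: "\<beta> \<noteq> 0" and rate_nz: "unif_rate \<alpha> \<delta> N \<noteq> 0"
  defines "q \<equiv> 1 - \<beta> / unif_rate \<alpha> \<delta> N" and "c \<equiv> \<alpha> * (\<integral>z. z^2 \<partial>\<rho>) / \<beta>"
  shows "(jump_op \<alpha> \<delta> \<rho> ks N ^^ n) (emp_var N) = (\<lambda>x. q ^ n * emp_var N x + c * (1 - q ^ n))"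
proof (induction n)
  case (Suc n)
  have "jump_op \<alpha> \<delta> \<rho> ks N (\<lambda>x. q ^ n * emp_var N x + c * (1 - q ^ n)) x
      = q ^ n * emp_var N x + c * (1 - q ^ n) + q ^ n * (c * \<beta> - \<beta> * emp_var N x) / unif_rate \<alpha> \<delta> N"
    for x
    unfolding jump_op_def gen_L_affine_emp_var[OF \<rho> N] \<beta>[symmetric] using \<beta>_nz
    by (simp add: c_def mult.assoc)
  also have "\<dots> x = q ^ Suc n * emp_var N x + c * (1 - q ^ Suc n)" for x
    using rate_nz by (simp add: q_def field_simps)
  finally show ?case using Suc.IH by simp
qed simp

lemma sums_poisson_weighted_geometric:
  fixes a q r c :: real
  shows "(\<lambda>n. exp (- a) * a ^ n / fact n * (q ^ n * r + c * (1 - q ^ n)))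
     sums (exp (- ((1 - q) * a)) * r + c * (1 - exp (- ((1 - q) * a))))"
proof -
  have "(\<lambda>n. exp (- a) * ((r - c) * ((q * a) ^ n / fact n) + c * (a ^ n / fact n)))
      sums (exp (- a) * ((r - c) * exp (q * a) + c * exp a))"
    using exp_converges[of a] exp_converges[of "q * a"]
    by (intro sums_mult sums_add) (simp_all add: divide_inverse mult.commute)
  moreover have "(\<lambda>n. exp (- a) * ((r - c) * ((q * a) ^ n / fact n) + c * (a ^ n / fact n)))
      = (\<lambda>n. exp (- a) * a ^ n / fact n * (q ^ n * r + c * (1 - q ^ n)))"
    by (rule ext) (simp add: power_mult_distrib field_simps)
  moreover have "exp (- a) * ((r - c) * exp (q * a) + c * exp a)
      = exp (- ((1 - q) * a)) * r + c * (1 - exp (- ((1 - q) * a)))"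
    by (simp add: algebra_simps flip: exp_add)
  ultimately show ?thesis by simp
qed

text \<open>The solution at time t of R' = A - \<beta> R with R 0 = r.\<close>
definition linear_relaxation :: "real \<Rightarrow> real \<Rightarrow> real \<Rightarrow> real \<Rightarrow> real" where
  "linear_relaxation A \<beta> r t = A / \<beta> * (1 - exp (- (\<beta> * t))) + exp (- (\<beta> * t)) * r"

lemma proc_expect_emp_var:
  fixes \<rho> :: "real measure"
  assumes \<rho>: "prob_space \<rho>" "sets \<rho> = sets borel" "AE z in \<rho>. \<bar>z\<bar> \<le> C"
    and N: "N \<ge> 2" "sum_list ks \<le> N"
    and \<beta>: "\<beta> = \<delta> * merged_pairs ks / (real N * (real N - 1))"
    and \<beta>_nz: "\<beta> \<noteq> 0" and rate_nz: "unif_rate \<alpha> \<delta> N \<noteq> 0"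
    and \<mu>: "prob_space \<mu>" "integrable \<mu> (emp_var N)"
  shows "proc_expect \<alpha> \<delta> \<rho> ks N \<mu> (emp_var N) t
    = linear_relaxation (\<alpha> * (\<integral>z. z^2 \<partial>\<rho>)) \<beta> (\<integral>x. emp_var N x \<partial>\<mu>) t"
proof -
  interpret \<mu>: prob_space \<mu> by (fact \<mu>(1))
  let ?a = "unif_rate \<alpha> \<delta> N * t" and ?q = "1 - \<beta> / unif_rate \<alpha> \<delta> N"
  have "(\<integral>x. ((jump_op \<alpha> \<delta> \<rho> ks N ^^ n) (emp_var N)) x \<partial>\<mu>)
      = ?q ^ n * (\<integral>x. emp_var N x \<partial>\<mu>) + \<alpha> * (\<integral>z. z^2 \<partial>\<rho>) / \<beta> * (1 - ?q ^ n)" for n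
    unfolding jump_op_power_emp_var[OF \<rho> N \<beta> \<beta>_nz rate_nz] using \<mu>(2) \<mu>.prob_space by simp
  moreover have "(1 - ?q) * ?a = \<beta> * t" using rate_nz by simp
  ultimately show ?thesis
    unfolding proc_expect_def
    using sums_poisson_weighted_geometric[of ?a ?q "\<integral>x. emp_var N x \<partial>\<mu>"
        "\<alpha> * (\<integral>z. z^2 \<partial>\<rho>) / \<beta>"]
    by (simp add: sums_iff linear_relaxation_def algebra_simps)
qed

section \<open>Asymptotics of linear relaxation\<close>

lemma tendsto_bounded_divide_at_top:
  fixes f g :: "'a \<Rightarrow> real"
  assumes "\<forall>\<^sub>F x in F. \<bar>f x\<bar> \<le> B" "filterlim g at_top F"
  shows "((\<lambda>x. f x / g x) \<longlongrightarrow> 0) F"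
proof (rule Lim_null_comparison)
  show "\<forall>\<^sub>F x in F. norm (f x / g x) \<le> B * inverse (g x)"
    using assms(1) assms(2)[unfolded filterlim_at_top_dense, rule_format, of 0]
    by eventually_elim (simp add: divide_right_mono field_simps)
  show "((\<lambda>x. B * inverse (g x)) \<longlongrightarrow> 0) F"
    using tendsto_mult_right_zero[OF tendsto_inverse_0_at_top[OF assms(2)]] .
qed

lemma asymp_equiv_of_tendsto_divide:
  fixes f g :: "'a \<Rightarrow> real"
  assumes "((\<lambda>x. f x / g x) \<longlongrightarrow> L) F" "L \<noteq> 0"
  shows "f \<sim>[F] (\<lambda>x. L * g x)"
proof (rule asymp_equivI')
  have "((\<lambda>x. f x / g x / L) \<longlongrightarrow> L / L) F"
    by (intro tendsto_divide assms tendsto_const)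
  then show "((\<lambda>x. f x / (L * g x)) \<longlongrightarrow> 1) F"
    using assms(2) by (simp add: mult.commute)
qed

lemma tendsto_linear_relaxation_scaled:
  fixes \<beta> r t :: "nat \<Rightarrow> real"
  assumes \<beta>: "((\<lambda>N. \<beta> N * (real N)^2) \<longlongrightarrow> K) sequentially" "K \<noteq> 0"
    and r: "\<forall>\<^sub>F N in sequentially. \<bar>r N\<bar> \<le> B"
    and E: "((\<lambda>N. exp (- (\<beta> N * t N))) \<longlongrightarrow> E) sequentially"
  shows "((\<lambda>N. linear_relaxation A (\<beta> N) (r N) (t N) / (real N)^2) \<longlongrightarrow> A / K * (1 - E)) sequentially"
proof -
  have "((\<lambda>N. A / (\<beta> N * (real N)^2) * (1 - exp (- (\<beta> N * t N)))
      + exp (- (\<beta> N * t N)) * (r N / (real N)^2)) \<longlongrightarrow> A / K * (1 - E) + E * 0) sequentially"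
    by (intro tendsto_intros \<beta> E tendsto_bounded_divide_at_top[OF r]) real_asymp
  then show ?thesis
    by (simp add: linear_relaxation_def add_divide_distrib)
qed

lemma linear_relaxation_short_time:
  fixes \<beta> r t :: "nat \<Rightarrow> real"
  assumes \<beta>: "((\<lambda>N. \<beta> N * (real N)^2) \<longlongrightarrow> K) sequentially" "K > 0" and "A \<noteq> 0"
    and r: "\<forall>\<^sub>F N in sequentially. \<bar>r N\<bar> \<le> B"
    and t: "filterlim t at_top sequentially" "((\<lambda>N. t N / (real N)^2) \<longlongrightarrow> 0) sequentially"
  shows "(\<lambda>N. linear_relaxation A (\<beta> N) (r N) (t N)) \<sim>[sequentially] (\<lambda>N. A * t N)"
proof (rule asymp_equivI')
  define y where "y N = \<beta> N * t N" for N
  have y_eq: "\<forall>\<^sub>F N in sequentially. y N = \<beta> N * (real N)^2 * (t N / (real N)^2)"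
    using eventually_gt_at_top[of 0] by eventually_elim (simp add: y_def)
  have y0: "(y \<longlongrightarrow> 0) sequentially"
    using tendsto_mult[OF \<beta>(1) t(2)] y_eq by (simp add: tendsto_cong)
  have t_pos: "\<forall>\<^sub>F N in sequentially. t N > 0"
    using t(1)[unfolded filterlim_at_top_dense, rule_format, of 0] .
  have "\<forall>\<^sub>F N in sequentially. y N > 0"
    using order_tendstoD(1)[OF \<beta>(1) \<beta>(2)] eventually_gt_at_top[of 0] t_pos
    by eventually_elim (auto simp: y_def zero_less_mult_iff)
  with y0 have y: "filterlim y (at_right 0) sequentially"
    by (rule tendsto_imp_filterlim_at_right)
  have "((\<lambda>y::real. (1 - exp (- y)) / y) \<longlongrightarrow> 1) (at_right 0)" by real_asymp
  from filterlim_compose[OF this y]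
  have main: "((\<lambda>N. (1 - exp (- y N)) / y N) \<longlongrightarrow> 1) sequentially" .
  have decay: "((\<lambda>N. exp (- y N)) \<longlongrightarrow> 1) sequentially"
    using tendsto_exp[OF tendsto_minus[OF y0]] by simp
  have initial: "((\<lambda>N. r N / t N / A) \<longlongrightarrow> 0) sequentially"
    using tendsto_divide_zero[OF tendsto_bounded_divide_at_top[OF r t(1)]] .
  have lim: "((\<lambda>N. (1 - exp (- y N)) / y N + exp (- y N) * (r N / t N / A)) \<longlongrightarrow> 1) sequentially"
    using tendsto_add[OF main tendsto_mult[OF decay initial]] by simp
  have "(1 - exp (- y N)) / y N + exp (- y N) * (r N / t N / A)
      = linear_relaxation A (\<beta> N) (r N) (t N) / (A * t N)" for N
    using \<open>A \<noteq> 0\<close> by (simp add: linear_relaxation_def y_def add_divide_distrib)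
  with lim show "((\<lambda>N. linear_relaxation A (\<beta> N) (r N) (t N) / (A * t N)) \<longlongrightarrow> 1) sequentially"
    by simp
qed

lemma linear_relaxation_asymptotics:
  fixes \<beta> r t R :: "nat \<Rightarrow> real"
  assumes \<beta>: "((\<lambda>N. \<beta> N * (real N)^2) \<longlongrightarrow> K) sequentially" "K > 0" and "A \<noteq> 0"
    and r: "\<forall>\<^sub>F N in sequentially. \<bar>r N\<bar> \<le> B"
    and t: "filterlim t at_top sequentially"
    and R: "\<forall>\<^sub>F N in sequentially. R N = linear_relaxation A (\<beta> N) (r N) (t N)"
  shows "((\<lambda>N. t N / (real N)^2) \<longlonglongrightarrow> 0 \<longrightarrow> R \<sim>[sequentially] (\<lambda>N. A * t N))
    \<and> (\<forall>c>0. (\<forall>N. t N = c * (real N)^2) \<longrightarrow>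
          R \<sim>[sequentially] (\<lambda>N. A / K * (1 - exp (- (K * c))) * (real N)^2))
    \<and> (filterlim (\<lambda>N. t N / (real N)^2) at_top sequentially \<longrightarrow>
          R \<sim>[sequentially] (\<lambda>N. A / K * (real N)^2))"
proof -
  have transfer: "R \<sim>[sequentially] g \<longleftrightarrow> (\<lambda>N. linear_relaxation A (\<beta> N) (r N) (t N)) \<sim>[sequentially] g"
    for g by (rule asymp_equiv_cong[OF R]) simp
  have K: "K \<noteq> 0" using \<beta>(2) by simp
  show ?thesis unfolding transfer
  proof (intro conjI allI impI)
    show "(\<lambda>N. linear_relaxation A (\<beta> N) (r N) (t N)) \<sim>[sequentially] (\<lambda>N. A * t N)"
      if "(\<lambda>N. t N / (real N)^2) \<longlonglongrightarrow> 0"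
      using linear_relaxation_short_time[OF \<beta> \<open>A \<noteq> 0\<close> r t that] .
  next
    fix c :: real assume "c > 0" and t_eq: "\<forall>N. t N = c * (real N)^2"
    have "\<beta> N * t N = \<beta> N * (real N)^2 * c" for N using t_eq by simp
    then have "((\<lambda>N. exp (- (\<beta> N * t N))) \<longlongrightarrow> exp (- (K * c))) sequentially"
      by (simp only:) (intro tendsto_intros \<beta>(1))
    from tendsto_linear_relaxation_scaled[OF \<beta>(1) K r this]
    show "(\<lambda>N. linear_relaxation A (\<beta> N) (r N) (t N))
        \<sim>[sequentially] (\<lambda>N. A / K * (1 - exp (- (K * c))) * (real N)^2)"
      using \<open>c > 0\<close> \<beta>(2) \<open>A \<noteq> 0\<close> by (intro asymp_equiv_of_tendsto_divide) simp_all
  next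
    assume "filterlim (\<lambda>N. t N / (real N)^2) at_top sequentially"
    then have lim: "filterlim (\<lambda>N. \<beta> N * (real N)^2 * (t N / (real N)^2)) at_top sequentially"
      using \<beta> by (intro filterlim_tendsto_pos_mult_at_top)
    have "\<forall>\<^sub>F N in sequentially. \<beta> N * (real N)^2 * (t N / (real N)^2) = \<beta> N * t N"
      using eventually_gt_at_top[of 0] by eventually_elim simp
    from iffD1[OF filterlim_cong[OF refl refl this] lim]
    have "((\<lambda>N. exp (- (\<beta> N * t N))) \<longlongrightarrow> 0) sequentially"
      by (intro filterlim_compose[OF exp_at_bot] filterlim_uminus_at_top[THEN iffD1])
    from tendsto_linear_relaxation_scaled[OF \<beta>(1) K r this]
    show "(\<lambda>N. linear_relaxation A (\<beta> N) (r N) (t N)) \<sim>[sequentially] (\<lambda>N. A / K * (real N)^2)"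
      using \<beta>(2) \<open>A \<noteq> 0\<close> by (intro asymp_equiv_of_tendsto_divide) simp_all
  qed
qed

theorem theorem2:
  fixes ks :: "nat list" and k :: nat and \<alpha> \<delta> :: real and \<rho> :: "real measure"
    and \<mu>0 :: "nat \<Rightarrow> (nat \<Rightarrow> real) measure" and t :: "nat \<Rightarrow> real"
  assumes k_def: "k = sum_list ks" and k2: "k \<ge> 2"
    and ks2: "\<forall>kj\<in>set ks. kj \<ge> 2"
    and \<alpha>: "\<alpha> > 0" and \<delta>: "\<delta> > 0"
    and \<rho>_prob: "prob_space \<rho>" and \<rho>_sets: "sets \<rho> = sets borel"
    and \<rho>_cpt: "\<exists>C. AE z in \<rho>. \<bar>z\<bar> \<le> C"
    and b2_pos: "(\<integral>z. z^2 \<partial>\<rho>) > 0"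
    and \<mu>0_prob: "\<forall>N\<ge>k. prob_space (\<mu>0 N)"
    and \<mu>0_sets: "\<forall>N\<ge>k. sets (\<mu>0 N) = sets (PiM {..<N} (\<lambda>_. borel))"
    and V0_int: "\<forall>N\<ge>k. integrable (\<mu>0 N) (emp_var N)"
    and R0_bdd: "\<exists>B. \<forall>N\<ge>k. \<bar>proc_expect \<alpha> \<delta> \<rho> ks N (\<mu>0 N) (emp_var N) 0\<bar> \<le> B"
    and t_lim: "filterlim t at_top sequentially"
  shows
    "let R = (\<lambda>N s. proc_expect \<alpha> \<delta> \<rho> ks N (\<mu>0 N) (emp_var N) s);
         b2 = (\<integral>z. z^2 \<partial>\<rho>);
         \<kappa> = real (\<Sum>j\<leftarrow>ks. j^2) - real k
     in ((\<lambda>N. t N / (real N)^2) \<longlonglongrightarrow> 0 \<longrightarrow>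
           (\<lambda>N. R N (t N)) \<sim>[sequentially] (\<lambda>N. \<alpha> * b2 * t N))
      \<and> (\<forall>c>0. (\<forall>N. t N = c * (real N)^2) \<longrightarrow>
           (\<lambda>N. R N (t N)) \<sim>[sequentially]
             (\<lambda>N. \<alpha> * b2 / (\<delta> * \<kappa>) * (1 - exp (- \<delta> * \<kappa> * c)) * (real N)^2))
      \<and> (filterlim (\<lambda>N. t N / (real N)^2) at_top sequentially \<longrightarrow>
           (\<lambda>N. R N (t N)) \<sim>[sequentially] (\<lambda>N. \<alpha> * b2 / (\<delta> * \<kappa>) * (real N)^2))"
proof -
  define A where "A = \<alpha> * (\<integral>z. z^2 \<partial>\<rho>)"
  define \<kappa> where "\<kappa> = real (\<Sum>j\<leftarrow>ks. j^2) - real k"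
  define \<beta> where "\<beta> N = \<delta> * \<kappa> / (real N * (real N - 1))" for N
  have \<kappa>: "\<kappa> = merged_pairs ks" by (simp add: \<kappa>_def merged_pairs_def k_def)
  have "\<kappa> > 0" unfolding \<kappa> using k2 ks2 k_def by (intro merged_pairs_pos) auto
  obtain C where C: "AE z in \<rho>. \<bar>z\<bar> \<le> C" using \<rho>_cpt by blast
  have closed_form: "proc_expect \<alpha> \<delta> \<rho> ks N (\<mu>0 N) (emp_var N) s
      = linear_relaxation A (\<beta> N) (\<integral>x. emp_var N x \<partial>\<mu>0 N) s" if "N \<ge> k" for N s
  proof (unfold A_def, rule proc_expect_emp_var[OF \<rho>_prob \<rho>_sets C])
    show "\<beta> N \<noteq> 0" using that k2 \<open>\<kappa> > 0\<close> \<delta> by (simp add: \<beta>_def)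
    have "\<alpha> * real N \<ge> 0" using \<alpha> by simp
    then show "unif_rate \<alpha> \<delta> N \<noteq> 0" using \<delta> unfolding unif_rate_def by linarith
  qed (use that k2 \<mu>0_prob V0_int in \<open>auto simp: \<beta>_def \<kappa> k_def\<close>)
  obtain B where B: "\<forall>N\<ge>k. \<bar>proc_expect \<alpha> \<delta> \<rho> ks N (\<mu>0 N) (emp_var N) 0\<bar> \<le> B"
    using R0_bdd by blast
  have bounded: "\<forall>\<^sub>F N in sequentially. \<bar>\<integral>x. emp_var N x \<partial>\<mu>0 N\<bar> \<le> B"
    using eventually_ge_at_top[of k]
    by eventually_elim (use B in \<open>simp add: closed_form linear_relaxation_def\<close>)
  have closed_form_at_t: "\<forall>\<^sub>F N in sequentially. proc_expect \<alpha> \<delta> \<rho> ks N (\<mu>0 N) (emp_var N) (t N)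
      = linear_relaxation A (\<beta> N) (\<integral>x. emp_var N x \<partial>\<mu>0 N) (t N)"
    using eventually_ge_at_top[of k] by eventually_elim (rule closed_form)
  have rate: "((\<lambda>N. \<beta> N * (real N)^2) \<longlongrightarrow> \<delta> * \<kappa>) sequentially"
    unfolding \<beta>_def by real_asymp
  have "\<delta> * \<kappa> > 0" "A \<noteq> 0" using \<delta> \<open>\<kappa> > 0\<close> \<alpha> b2_pos by (simp_all add: A_def)
  from linear_relaxation_asymptotics[OF rate this bounded t_lim closed_form_at_t]
  show ?thesis unfolding Let_def A_def[symmetric] mult_minus_left \<kappa>_def[symmetric] .
qed

end
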